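(* Let $M'\in\mathbb{R}^{n\times m}$ and let $\mathcal{M}\subseteq\mathcal{Q}(M')$ be such that for every $M\in\mathcal{M}$ the DSR graph $G_{M,M^t}$ is steady. Then for any $A,B^t\in\overline{\mathcal{M}}$ (the closure of $\mathcal{M}$), the matrix $AB$ is a $P_0$-matrix.
   Context: For $M\in\mathbb{R}^{n\times m}$, the qualitative class $\mathcal{Q}(M)$ is the set of real $n\times m$ matrices with the same entrywise sign pattern (signs in $\{-,0,+\}$) as $M$. A square real matrix is a $P_0$-matrix if all principal minors are nonnegative. DSR graphs: for $A\in\mathbb{R}^{n\times m}$, $B\in\mathbb{R}^{m\times n}$, $G_{A,B}$ is the signed, labelled bipartite digraph with S-vertices $S_1,\dots,S_n$ and R-vertices $R_1,\dots,R_m$, with an arc $R_j\to S_i$ of sign $\mathrm{sign}(A_{ij})$ iff $A_{ij}\ne0$ and an arc $S_i\to R_j$ of sign $\mathrm{sign}(B_{ji})$ iff $B_{ji}\ne0$; a pair of antiparallel arcs of the same sign is regarded as a single undirected edge. An edge arising from $A_{ij}\ne0$ (R-to-S or undirected) has label $|A_{ij}|$; an edge with only S-to-R orientation has label $\infty$. A cycle is a nonempty closed walk (traversing edges consistently with orientation) repeating no vertex except first$=$last. A cycle $(e_1,\dots,e_{2r})$ is an s-cycle if all labels are finite and $\prod_{i=1}^r l(e_{2i-1})=\prod_{i=1}^r l(e_{2i})$. $G_{A,B}$ is steady if all of its cycles are s-cycles. *)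

theory Defs
  imports "HOL-Analysis.Analysis"
begin

text \<open>Matrices: an n x m real matrix is a value of type real^'m^'n
  (rows indexed by 'n, columns by 'm).\<close>

definition qual_class :: "real^'m^'n \<Rightarrow> (real^'m^'n) set" where
  "qual_class M' = {M. \<forall>i j. sgn (M $ i $ j) = sgn (M' $ i $ j)}"

definition principal_minor :: "real^'n^'n \<Rightarrow> 'n set \<Rightarrow> real" where
  "principal_minor M S =
     (\<Sum>p\<in>{p. p permutes S}. of_int (sign p) * (\<Prod>i\<in>S. M $ i $ p i))"

definition P0_matrix :: "real^'n^'n \<Rightarrow> bool" where
  "P0_matrix M \<longleftrightarrow> (\<forall>S. principal_minor M S \<ge> 0)"

datatype ('n, 'm) dsr_vertex = SV 'n | RV 'm

text \<open>Edges of the DSR graph: an undirected edge between S_i and R_j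
  (antiparallel arcs of the same sign), an arc R_j -> S_i, or an arc S_i -> R_j.\<close>
datatype ('n, 'm) dsr_edge = Undir 'n 'm | ArcRS 'm 'n | ArcSR 'n 'm

definition dsr_edges :: "real^'m^'n \<Rightarrow> real^'n^'m \<Rightarrow> ('n,'m) dsr_edge set" where
  "dsr_edges A B =
     {Undir i j | i j. A $ i $ j \<noteq> 0 \<and> B $ j $ i \<noteq> 0 \<and> sgn (A $ i $ j) = sgn (B $ j $ i)}
   \<union> {ArcRS j i | i j. A $ i $ j \<noteq> 0 \<and>
        \<not> (B $ j $ i \<noteq> 0 \<and> sgn (A $ i $ j) = sgn (B $ j $ i))}
   \<union> {ArcSR i j | i j. B $ j $ i \<noteq> 0 \<and>
        \<not> (A $ i $ j \<noteq> 0 \<and> sgn (A $ i $ j) = sgn (B $ j $ i))}"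

fun dsr_label :: "real^'m^'n \<Rightarrow> ('n,'m) dsr_edge \<Rightarrow> ereal" where
  "dsr_label A (Undir i j) = ereal \<bar>A $ i $ j\<bar>"
| "dsr_label A (ArcRS j i) = ereal \<bar>A $ i $ j\<bar>"
| "dsr_label A (ArcSR i j) = \<infinity>"

fun traverses :: "('n,'m) dsr_edge \<Rightarrow> ('n,'m) dsr_vertex \<Rightarrow> ('n,'m) dsr_vertex \<Rightarrow> bool" where
  "traverses (Undir i j) u v \<longleftrightarrow> (u = SV i \<and> v = RV j) \<or> (u = RV j \<and> v = SV i)"
| "traverses (ArcRS j i) u v \<longleftrightarrow> u = RV j \<and> v = SV i"
| "traverses (ArcSR i j) u v \<longleftrightarrow> u = SV i \<and> v = RV j"

definition dsr_cycle :: "real^'m^'n \<Rightarrow> real^'n^'m \<Rightarrow>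
    ('n,'m) dsr_edge list \<Rightarrow> ('n,'m) dsr_vertex list \<Rightarrow> bool" where
  "dsr_cycle A B es vs \<longleftrightarrow>
     es \<noteq> [] \<and> length vs = length es \<and> distinct vs \<and> distinct es \<and>
     set es \<subseteq> dsr_edges A B \<and>
     (\<forall>t < length es. traverses (es ! t) (vs ! t) (vs ! ((t + 1) mod length es)))"

text \<open>s-cycle: all labels finite and product of labels of e_1,e_3,... equals
  product of labels of e_2,e_4,... (0-based: even vs odd positions).\<close>
definition s_cycle :: "real^'m^'n \<Rightarrow> ('n,'m) dsr_edge list \<Rightarrow> bool" where
  "s_cycle A es \<longleftrightarrow>
     (\<forall>e \<in> set es. dsr_label A e \<noteq> \<infinity>) \<and>
     (\<Prod>t\<in>{t. t < length es \<and> even t}. real_of_ereal (dsr_label A (es ! t))) =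
     (\<Prod>t\<in>{t. t < length es \<and> odd t}. real_of_ereal (dsr_label A (es ! t)))"

definition dsr_steady :: "real^'m^'n \<Rightarrow> real^'n^'m \<Rightarrow> bool" where
  "dsr_steady A B \<longleftrightarrow> (\<forall>es vs. dsr_cycle A B es vs \<longrightarrow> s_cycle A es)"

end

theory Submission
  imports Defs "HOL-Combinatorics.Cycles"
begin

text \<open>
  By Cauchy--Binet, the principal minor of A B = A (B^t)^t on S is the sum, over column sets T,
  of det A[S,T] * det B^t[S,T]. For M in the class, two nonzero terms f, g of the Leibniz
  expansion of det M[S,T] differ by the permutation g^-1 o f; each cycle of it gives a cycle of
  the DSR graph of (M, M^t) alternating between entries M i (f i) and M i (g i), so steadiness
  makes both products equal in absolute value. Hence det M[S,T] = c_M * K_T with c_M >= 0 and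
  K_T determined by the sign pattern, and every Cauchy--Binet term is c_A c_B K_T^2 >= 0.
  Principal minors are continuous, so nonnegativity passes to the closure.
\<close>

lemma prod_lessThan_Suc_periodic:
  assumes "h r = h 0"
  shows "(\<Prod>k<r. h (Suc k)) = (\<Prod>k<r. h k)"
proof (cases r)
  case (Suc n)
  have "(\<Prod>k<Suc n. h (Suc k)) = (\<Prod>k<n. h (Suc k)) * h 0"
    using assms Suc by simp
  also have "\<dots> = (\<Prod>k<Suc n. h k)"
    by (simp only: prod.lessThan_Suc_shift mult.commute)
  finally show ?thesis using Suc by simp
qed simp

text \<open>
  The closed walk S (x 0), R (f (x 0)), S (x 1), R (f (x 1)), ... of length 2r. Its s-cycle
  condition compares the entries M (x k) (f (x k)) with M (x (k+1)) (f (x k)).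
\<close>

definition alt_vertex :: "(nat \<Rightarrow> 'n) \<Rightarrow> ('n \<Rightarrow> 'm) \<Rightarrow> nat \<Rightarrow> ('n, 'm) dsr_vertex" where
  "alt_vertex x f t = (if even t then SV (x (t div 2)) else RV (f (x (t div 2))))"

definition alt_edge :: "(nat \<Rightarrow> 'n) \<Rightarrow> ('n \<Rightarrow> 'm) \<Rightarrow> nat \<Rightarrow> ('n, 'm) dsr_edge" where
  "alt_edge x f t =
     (if even t then Undir (x (t div 2)) (f (x (t div 2)))
      else Undir (x (Suc (t div 2))) (f (x (t div 2))))"

locale alternating_cycle =
  fixes x :: "nat \<Rightarrow> 'n::finite" and f :: "'n \<Rightarrow> 'm::finite" and r :: nat
  assumes length_gt_one: "1 < r"
    and inj_x: "inj_on x {..<r}"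
    and closed: "x r = x 0"
    and inj_f: "inj_on f (x ` {..<r})"
begin

lemma inj_on_shifted: "inj_on x {1..r}"
proof -
  have "{1..r} = insert r {1..<r}" using length_gt_one by auto
  moreover have "inj_on x {1..<r}" using inj_x by (rule inj_on_subset) auto
  moreover have "x 0 \<notin> x ` {1..<r}" using inj_x length_gt_one by (force simp: inj_on_def)
  ultimately show ?thesis using closed by simp
qed

lemma x_Suc_inj: "x (Suc i) = x (Suc j) \<Longrightarrow> i < r \<Longrightarrow> j < r \<Longrightarrow> i = j"
  using inj_onD[OF inj_on_shifted] by fastforce

lemma x_Suc_neq: "x (Suc k) \<noteq> x k" if "k < r"
proof
  assume eq: "x (Suc k) = x k"
  show False
  proof (cases "Suc k = r")
    case True
    then have "x 0 = x k" using eq closed by simp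
    then have "k = 0" using inj_onD[OF inj_x] that by fastforce
    then show False using True length_gt_one by simp
  next
    case False
    then show False using inj_onD[OF inj_x eq] that by simp
  qed
qed

lemma distinct_alt_vertices: "distinct (map (alt_vertex x f) [0..<2*r])"
proof -
  have "inj_on (alt_vertex x f) {..<2*r}"
  proof (rule inj_onI)
    fix a b assume "a \<in> {..<2*r}" "b \<in> {..<2*r}" "alt_vertex x f a = alt_vertex x f b"
    then have "a div 2 = b div 2" "even a \<longleftrightarrow> even b"
      using inj_x inj_f by (auto simp: alt_vertex_def inj_on_def split: if_splits)
    then show "a = b" by (metis div_mult_mod_eq mod2_eq_if)
  qed
  then show ?thesis by (simp add: distinct_map lessThan_atLeast0)
qed

lemma distinct_alt_edges: "distinct (map (alt_edge x f) [0..<2*r])"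
proof -
  have half: "t div 2 < r" if "t < 2*r" for t
    using that by auto
  have mixed: False
    if "c < 2*r" "d < 2*r" "even c" "odd d" "alt_edge x f c = alt_edge x f d" for c d
  proof -
    have "x (c div 2) = x (Suc (d div 2))" and f_eq: "f (x (c div 2)) = f (x (d div 2))"
      using that(3-5) unfolding alt_edge_def by (metis dsr_edge.inject(1))+
    moreover have "x (c div 2) = x (d div 2)"
      using inj_onD[OF inj_f f_eq] that(1,2) by simp
    ultimately have "x (Suc (d div 2)) = x (d div 2)" by simp
    then show False using x_Suc_neq half that(2) by blast
  qed
  have "inj_on (alt_edge x f) {..<2*r}"
  proof (rule inj_onI)
    fix a b assume "a \<in> {..<2*r}" "b \<in> {..<2*r}" and eq: "alt_edge x f a = alt_edge x f b"
    then have a: "a < 2*r" and b: "b < 2*r" by simp_all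
    have parity: "even a \<longleftrightarrow> even b"
      using mixed[OF a b _ _ eq] mixed[OF b a _ _ eq[symmetric]] by blast
    have "a div 2 = b div 2"
    proof (cases "even a")
      case True
      then have "x (a div 2) = x (b div 2)" using eq parity by (simp add: alt_edge_def)
      then show ?thesis using inj_onD[OF inj_x] half a b by simp
    next
      case False
      then have "x (Suc (a div 2)) = x (Suc (b div 2))" using eq parity by (simp add: alt_edge_def)
      then show ?thesis using x_Suc_inj half a b by simp
    qed
    then show "a = b" using parity by (metis div_mult_mod_eq mod2_eq_if)
  qed
  then show ?thesis by (simp add: distinct_map lessThan_atLeast0)
qed

lemma traverses_alt_edge:
  assumes "t < 2*r"
  shows "traverses (alt_edge x f t) (alt_vertex x f t) (alt_vertex x f (Suc t mod (2*r)))"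
proof (cases "even t")
  case True
  then have "Suc t \<noteq> 2*r" by (metis even_Suc dvd_triv_left)
  then have "Suc t mod (2*r) = Suc t" using assms by simp
  then show ?thesis using True by (simp add: alt_edge_def alt_vertex_def)
next
  case False
  have half: "Suc t div 2 = Suc (t div 2)" using False by simp
  consider "Suc t = 2*r" | "Suc t < 2*r" using assms by linarith
  then have "alt_vertex x f (Suc t mod (2*r)) = SV (x (Suc (t div 2)))"
  proof cases
    case 1
    then have "Suc (t div 2) = r" using half by simp
    then show ?thesis using 1 closed by (simp add: alt_vertex_def)
  next
    case 2
    then show ?thesis using False by (simp add: alt_vertex_def)
  qed
  then show ?thesis using False by (simp add: alt_edge_def alt_vertex_def)
qed

lemma dsr_cycle_alt:
  assumes "\<And>k. k < r \<Longrightarrow> M $ x k $ f (x k) \<noteq> 0"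
    and "\<And>k. k < r \<Longrightarrow> M $ x (Suc k) $ f (x k) \<noteq> 0"
  shows "dsr_cycle M (transpose M) (map (alt_edge x f) [0..<2*r]) (map (alt_vertex x f) [0..<2*r])"
  unfolding dsr_cycle_def
proof (intro conjI allI impI)
  have undir: "Undir i j \<in> dsr_edges M (transpose M)" if "M $ i $ j \<noteq> 0" for i j
    using that unfolding dsr_edges_def transpose_def by auto
  show "set (map (alt_edge x f) [0..<2*r]) \<subseteq> dsr_edges M (transpose M)"
  proof
    fix e assume "e \<in> set (map (alt_edge x f) [0..<2*r])"
    then obtain t where "t < 2*r" "e = alt_edge x f t" by auto
    moreover have "t div 2 < r" using \<open>t < 2*r\<close> by simp
    ultimately show "e \<in> dsr_edges M (transpose M)"
      using undir assms by (simp add: alt_edge_def)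
  qed
  show "map (alt_edge x f) [0..<2*r] \<noteq> []" using length_gt_one by simp
  fix t assume "t < length (map (alt_edge x f) [0..<2*r])"
  then have "t < 2*r" by simp
  then show "traverses (map (alt_edge x f) [0..<2*r] ! t) (map (alt_vertex x f) [0..<2*r] ! t)
      (map (alt_vertex x f) [0..<2*r] ! ((t + 1) mod length (map (alt_edge x f) [0..<2*r])))"
    using traverses_alt_edge by (simp add: length_gt_one)
qed (simp_all add: distinct_alt_vertices distinct_alt_edges)

lemma steady_alt_prod_eq:
  assumes steady: "dsr_steady M (transpose M)"
    and nz_f: "\<And>k. k < r \<Longrightarrow> M $ x k $ f (x k) \<noteq> 0"
    and nz_shift: "\<And>k. k < r \<Longrightarrow> M $ x (Suc k) $ f (x k) \<noteq> 0"
  shows "(\<Prod>k<r. \<bar>M $ x k $ f (x k)\<bar>) = (\<Prod>k<r. \<bar>M $ x (Suc k) $ f (x k)\<bar>)"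
proof -
  define es where "es = map (alt_edge x f) [0..<2*r]"
  have "s_cycle M es"
    using steady dsr_cycle_alt[OF nz_f nz_shift] unfolding dsr_steady_def es_def by blast
  moreover have "{t. t < length es \<and> even t} = (\<lambda>k. 2*k) ` {..<r}"
    by (auto simp: es_def image_iff elim!: evenE)
  moreover have "{t. t < length es \<and> odd t} = (\<lambda>k. 2*k+1) ` {..<r}"
    by (auto simp: es_def image_iff elim!: oddE)
  ultimately show ?thesis
    unfolding s_cycle_def by (simp add: prod.reindex inj_on_def es_def alt_edge_def)
qed

end

lemma steady_orbit_prod_eq:
  fixes M :: "real^'m::finite^'n::finite"
  assumes steady: "dsr_steady M (transpose M)"
    and p: "p permutes S" and fin: "finite S"
    and g_p: "\<forall>i\<in>S. g (p i) = f i" and inj_f: "inj_on f S"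
    and nz_f: "\<forall>i\<in>S. M $ i $ f i \<noteq> 0" and nz_g: "\<forall>i\<in>S. M $ i $ g i \<noteq> 0"
    and a: "a \<in> S" "p a \<noteq> a"
  shows "(\<Prod>i\<in>set (support p a). \<bar>M $ i $ f i\<bar>) = (\<Prod>i\<in>set (support p a). \<bar>M $ i $ g i\<bar>)"
proof -
  define x where "x k = (p ^^ k) a" for k
  define r where "r = least_power p a"
  have perm: "permutation p" using fin p by (rule permutes_imp_permutation)
  have inj_x: "inj_on x {..<r}"
    using cycle_of_permutation[OF perm, of a]
    unfolding x_def[abs_def] r_def by (simp add: distinct_map atLeast_upt lessThan_atLeast0)
  have x_S: "x k \<in> S" for k
    using permutes_in_image[OF permutes_funpow[OF p]] a(1) by (simp add: x_def)
  have x_Suc: "x (Suc k) = p (x k)" for k by (simp add: x_def)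
  interpret alternating_cycle x f r
  proof
    show "1 < r" using least_power_gt_one[OF perm a(2)] by (simp add: r_def)
    show "x r = x 0" using least_power_of_permutation(1)[OF perm] by (simp add: x_def r_def)
    show "inj_on f (x ` {..<r})" using x_S by (auto intro: inj_on_subset[OF inj_f])
  qed (fact inj_x)
  have g_Suc: "g (x (Suc k)) = f (x k)" for k using g_p x_S x_Suc by simp
  have "(\<Prod>k<r. \<bar>M $ x k $ f (x k)\<bar>) = (\<Prod>k<r. \<bar>M $ x (Suc k) $ g (x (Suc k))\<bar>)"
    unfolding g_Suc by (rule steady_alt_prod_eq[OF steady]) (use nz_f nz_g x_S g_Suc in metis)+
  also have "\<dots> = (\<Prod>k<r. \<bar>M $ x k $ g (x k)\<bar>)"
    by (rule prod_lessThan_Suc_periodic) (simp add: closed)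
  finally have "(\<Prod>k<r. \<bar>M $ x k $ f (x k)\<bar>) = (\<Prod>k<r. \<bar>M $ x k $ g (x k)\<bar>)" .
  moreover have "set (support p a) = x ` {..<r}"
    unfolding x_def[abs_def] r_def by (simp add: lessThan_atLeast0)
  ultimately show ?thesis by (simp add: prod.reindex[OF inj_x])
qed

lemma permutes_inv_into_comp:
  assumes "inj_on f S" "inj_on g S" "f ` S = g ` S"
  shows "(\<lambda>k. if k \<in> S then inv_into S g (f k) else k) permutes S"
    and "i \<in> S \<Longrightarrow> g ((\<lambda>k. if k \<in> S then inv_into S g (f k) else k) i) = f i"
proof -
  have "bij_betw f S (g ` S)" using assms by (simp add: bij_betw_def)
  moreover have "bij_betw (inv_into S g) (g ` S) S"
    using assms(2) by (simp add: bij_betw_inv_into inj_on_imp_bij_betw)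
  ultimately have "bij_betw (inv_into S g \<circ> f) S S" by (rule bij_betw_trans)
  then have "bij_betw (\<lambda>k. if k \<in> S then inv_into S g (f k) else k) S S"
    by (rule bij_betw_cong[THEN iffD1, rotated]) auto
  then show "(\<lambda>k. if k \<in> S then inv_into S g (f k) else k) permutes S"
    by (rule bij_imp_permutes) auto
  show "i \<in> S \<Longrightarrow> g ((\<lambda>k. if k \<in> S then inv_into S g (f k) else k) i) = f i"
    using assms(3) by (simp add: f_inv_into_f[where f=g] imageI[of i S f, simplified assms(3)])
qed

lemma inj_on_patch:
  assumes inj_f: "inj_on f S" and inj_g: "inj_on g S" and "C \<subseteq> S"
    and "f ` S = g ` S" and "f ` C = g ` C"
  shows "inj_on (\<lambda>i. if i \<in> C then g i else f i) S"
    and "(\<lambda>i. if i \<in> C then g i else f i) ` S = g ` S"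
proof -
  let ?h = "\<lambda>i. if i \<in> C then g i else f i"
  have "f ` (S - C) = g ` (S - C)"
    using assms by (simp add: inj_on_image_set_diff[OF inj_f] inj_on_image_set_diff[OF inj_g])
  moreover have "?h ` C = g ` C" "?h ` (S - C) = f ` (S - C)" by auto
  ultimately have images: "?h ` C = g ` C" "?h ` (S - C) = g ` (S - C)" by simp_all
  have "inj_on ?h C" using inj_on_subset[OF inj_g \<open>C \<subseteq> S\<close>] by (simp add: inj_on_def)
  moreover have "inj_on ?h (S - C)" using inj_on_subset[OF inj_f, of "S - C"] by (simp add: inj_on_def)
  moreover have "g ` C \<inter> g ` (S - C) = {}"
    using inj_on_image_Int[OF inj_g, of C "S - C"] \<open>C \<subseteq> S\<close> by auto
  moreover have "C - (S - C) = C" "(S - C) - C = S - C" by auto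
  ultimately have "inj_on ?h (C \<union> (S - C))"
    using images by (simp only: inj_on_Un)
  then show "inj_on ?h S" using \<open>C \<subseteq> S\<close> by (simp add: Un_absorb1)
  have "?h ` S = ?h ` C \<union> ?h ` (S - C)" using \<open>C \<subseteq> S\<close> by blast
  also have "\<dots> = g ` S" using images \<open>C \<subseteq> S\<close> by blast
  finally show "?h ` S = g ` S" .
qed

lemma support_subset_image_eq:
  assumes p: "p permutes S" and fin: "finite S" and g_p: "\<forall>i\<in>S. g (p i) = f i"
    and inj_f: "inj_on f S" and inj_g: "inj_on g S" and a: "a \<in> S"
  shows "set (support p a) \<subseteq> S" and "f ` set (support p a) = g ` set (support p a)"
proof -
  have C_orbit: "set (support p a) = range (\<lambda>k. (p ^^ k) a)"
    using support_set[OF permutes_imp_permutation[OF fin p]] .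
  show C_S: "set (support p a) \<subseteq> S"
    using permutes_in_image[OF permutes_funpow[OF p]] a by (auto simp: C_orbit)
  have "f ` set (support p a) \<subseteq> g ` set (support p a)"
  proof
    fix y assume "y \<in> f ` set (support p a)"
    then obtain k where "y = f ((p ^^ k) a)" by (auto simp: C_orbit)
    moreover have "(p ^^ k) a \<in> S" using C_S[unfolded C_orbit] by auto
    ultimately have "y = g ((p ^^ Suc k) a)" using g_p by simp
    then show "y \<in> g ` set (support p a)"
      unfolding C_orbit using rangeI[of "\<lambda>k. (p ^^ k) a" "Suc k"] by blast
  qed
  moreover have "card (f ` set (support p a)) = card (g ` set (support p a))"
    using inj_on_subset[OF inj_f C_S] inj_on_subset[OF inj_g C_S] by (simp add: card_image)
  ultimately show "f ` set (support p a) = g ` set (support p a)"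
    using finite_subset[OF C_S fin] by (simp add: card_subset_eq)
qed

lemma steady_abs_prod_eq:
  fixes M :: "real^'m::finite^'n::finite"
  assumes steady: "dsr_steady M (transpose M)" and fin: "finite S"
    and inj_g: "inj_on g S" and nz_g: "\<forall>i\<in>S. M $ i $ g i \<noteq> 0"
  shows "inj_on f S \<Longrightarrow> f ` S = g ` S \<Longrightarrow> \<forall>i\<in>S. M $ i $ f i \<noteq> 0 \<Longrightarrow>
    \<bar>\<Prod>i\<in>S. M $ i $ f i\<bar> = \<bar>\<Prod>i\<in>S. M $ i $ g i\<bar>"
proof (induction "card {i\<in>S. f i \<noteq> g i}" arbitrary: f rule: less_induct)
  \<comment> \<open>on the orbit of a disagreement under g^-1 o f, f may be replaced by g\<close>
  case (less f)
  show ?case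
  proof (cases "\<forall>i\<in>S. f i = g i")
    case True
    then show ?thesis by simp
  next
    case False
    then obtain a where a: "a \<in> S" "f a \<noteq> g a" by blast
    define p where "p = (\<lambda>k. if k \<in> S then inv_into S g (f k) else k)"
    have p: "p permutes S" and g_p: "\<forall>i\<in>S. g (p i) = f i"
      using permutes_inv_into_comp[OF less.prems(1) inj_g less.prems(2)] by (auto simp: p_def)
    have perm: "permutation p" using fin p by (rule permutes_imp_permutation)
    define C where "C = set (support p a)"
    have "C \<subseteq> S" and "f ` C = g ` C"
      using support_subset_image_eq[OF p fin g_p less.prems(1) inj_g a(1)] by (simp_all add: C_def)
    have "a \<in> C"
      using least_power_of_permutation(2)[OF perm] by (auto simp: C_def intro!: image_eqI[of _ _ 0])
    define h where "h i = (if i \<in> C then g i else f i)" for i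
    have inj_h: "inj_on h S" and h_image: "h ` S = g ` S"
      using inj_on_patch[OF less.prems(1) inj_g \<open>C \<subseteq> S\<close> less.prems(2) \<open>f ` C = g ` C\<close>]
      by (simp_all add: h_def[abs_def])
    have nz_h: "\<forall>i\<in>S. M $ i $ h i \<noteq> 0" using less.prems(3) nz_g by (simp add: h_def)
    have orbit: "(\<Prod>i\<in>C. \<bar>M $ i $ f i\<bar>) = (\<Prod>i\<in>C. \<bar>M $ i $ g i\<bar>)"
      unfolding C_def
      by (rule steady_orbit_prod_eq[OF steady p fin g_p less.prems(1,3) nz_g a(1)])
        (use g_p a in metis)
    have "\<bar>\<Prod>i\<in>S. M $ i $ f i\<bar> = (\<Prod>i\<in>S - C. \<bar>M $ i $ f i\<bar>) * (\<Prod>i\<in>C. \<bar>M $ i $ f i\<bar>)"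
      unfolding abs_prod by (rule prod.subset_diff[OF \<open>C \<subseteq> S\<close> fin])
    also have "\<dots> = (\<Prod>i\<in>S - C. \<bar>M $ i $ h i\<bar>) * (\<Prod>i\<in>C. \<bar>M $ i $ h i\<bar>)"
      using orbit by (simp add: h_def)
    also have "\<dots> = \<bar>\<Prod>i\<in>S. M $ i $ h i\<bar>"
      unfolding abs_prod by (rule prod.subset_diff[OF \<open>C \<subseteq> S\<close> fin, symmetric])
    also have "\<dots> = \<bar>\<Prod>i\<in>S. M $ i $ g i\<bar>"
    proof (rule less.hyps[OF _ inj_h h_image nz_h])
      have "{i\<in>S. h i \<noteq> g i} \<subset> {i\<in>S. f i \<noteq> g i}"
        using a \<open>a \<in> C\<close> by (auto simp: h_def)
      then show "card {i\<in>S. h i \<noteq> g i} < card {i\<in>S. f i \<noteq> g i}"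
        using fin by (simp add: psubset_card_mono)
    qed
    finally show ?thesis .
  qed
qed

definition injections :: "'n set \<Rightarrow> ('n \<Rightarrow> 'm) set" where
  "injections S = {f \<in> S \<rightarrow>\<^sub>E UNIV. inj_on f S}"

definition transversal_prod :: "real^'m^'n \<Rightarrow> 'n set \<Rightarrow> ('n \<Rightarrow> 'm) \<Rightarrow> real" where
  "transversal_prod X S f = (\<Prod>i\<in>S. X $ i $ f i)"

definition minor_along :: "real^'m^'n \<Rightarrow> 'n set \<Rightarrow> ('n \<Rightarrow> 'm) \<Rightarrow> real" where
  "minor_along Y S f = (\<Sum>p | p permutes S. of_int (sign p) * (\<Prod>i\<in>S. Y $ p i $ f i))"

definition image_rep :: "'n set \<Rightarrow> ('n \<Rightarrow> 'm) \<Rightarrow> 'n \<Rightarrow> 'm" where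
  "image_rep S f = (SOME h. h \<in> injections S \<and> h ` S = f ` S)"

definition rep_perm :: "'n set \<Rightarrow> ('n \<Rightarrow> 'm) \<Rightarrow> 'n \<Rightarrow> 'n" where
  "rep_perm S f = (\<lambda>k. if k \<in> S then inv_into S (image_rep S f) (f k) else k)"

definition rep_sign :: "'n set \<Rightarrow> ('n \<Rightarrow> 'm) \<Rightarrow> real" where
  "rep_sign S f = of_int (sign (rep_perm S f))"

text \<open>
  Up to a sign fixed by the choice of \<open>image_rep S f\<close>, \<open>signed_minor X S T\<close> is the minor of \<open>X\<close>
  with rows \<open>S\<close> and columns \<open>T\<close>; that sign cancels in \<open>signed_minor X S T * signed_minor Y S T\<close>.
\<close>

definition signed_minor :: "real^'m^'n \<Rightarrow> 'n set \<Rightarrow> 'm set \<Rightarrow> real" where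
  "signed_minor X S T = (\<Sum>f | f \<in> injections S \<and> f ` S = T. rep_sign S f * transversal_prod X S f)"

lemma finite_injections: "finite (injections (S :: 'n::finite set) :: ('n \<Rightarrow> 'm::finite) set)"
  unfolding injections_def by (simp add: finite_PiE)

lemma image_rep: "f \<in> injections S \<Longrightarrow> image_rep S f \<in> injections S \<and> image_rep S f ` S = f ` S"
  unfolding image_rep_def by (rule someI[of _ f]) simp

lemma rep_perm_permutes:
  assumes f: "f \<in> injections S"
  shows "rep_perm S f permutes S"
proof -
  have "inj_on (image_rep S f) S" "f ` S = image_rep S f ` S"
    using image_rep[OF f] by (auto simp: injections_def)
  then show ?thesis
    unfolding rep_perm_def using f by (intro permutes_inv_into_comp(1)) (auto simp: injections_def)
qed

lemma comp_permutes_injections: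
  assumes "f \<in> injections S" "q permutes S"
  shows "f \<circ> q \<in> injections S" and "(f \<circ> q) ` S = f ` S"
proof -
  show "(f \<circ> q) ` S = f ` S" using permutes_image[OF assms(2)] by (metis image_comp)
  have "inj_on (f \<circ> q) S"
    using assms permutes_image[OF assms(2)] permutes_inj_on[OF assms(2)]
    by (auto simp: injections_def intro: comp_inj_on)
  moreover have "f \<circ> q \<in> S \<rightarrow>\<^sub>E UNIV"
    using assms by (auto simp: injections_def PiE_def extensional_def permutes_not_in)
  ultimately show "f \<circ> q \<in> injections S" by (simp add: injections_def)
qed

lemma rep_sign_comp:
  fixes f :: "'n::finite \<Rightarrow> 'm"
  assumes f: "f \<in> injections S" and q: "q permutes S"
  shows "rep_sign S (f \<circ> q) = rep_sign S f * of_int (sign q)"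
proof -
  have "image_rep S (f \<circ> q) = image_rep S f"
    unfolding image_rep_def using comp_permutes_injections(2)[OF f q] by simp
  then have "rep_perm S (f \<circ> q) = rep_perm S f \<circ> q"
    using q by (intro ext) (simp add: rep_perm_def permutes_in_image permutes_not_in)
  moreover have "sign (rep_perm S f \<circ> q) = sign (rep_perm S f) * sign q"
    using sign_compose permutes_imp_permutation rep_perm_permutes[OF f] q finite by blast
  ultimately show ?thesis by (simp add: rep_sign_def)
qed

lemma rep_sign_square: "rep_sign S f * rep_sign S f = 1"
  unfolding rep_sign_def by (metis of_int_1 of_int_mult sign_idempotent)

lemma principal_minor_mult_transpose:
  fixes X Y :: "real^'m::finite^'n::finite"
  shows "principal_minor (X ** transpose Y) S =
    (\<Sum>f \<in> S \<rightarrow>\<^sub>E UNIV. transversal_prod X S f * minor_along Y S f)"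
proof -
  have "principal_minor (X ** transpose Y) S =
     (\<Sum>p | p permutes S. of_int (sign p) * (\<Prod>i\<in>S. \<Sum>j\<in>UNIV. X $ i $ j * Y $ p i $ j))"
    unfolding principal_minor_def by (simp add: matrix_matrix_mult_def transpose_def)
  also have "\<dots> = (\<Sum>p | p permutes S. of_int (sign p) *
      (\<Sum>f \<in> S \<rightarrow>\<^sub>E UNIV. \<Prod>i\<in>S. X $ i $ f i * Y $ p i $ f i))"
    by (simp add: prod_sum_PiE)
  also have "\<dots> = (\<Sum>p | p permutes S. \<Sum>f \<in> S \<rightarrow>\<^sub>E UNIV.
      transversal_prod X S f * (of_int (sign p) * (\<Prod>i\<in>S. Y $ p i $ f i)))"
    by (simp add: sum_distrib_left prod.distrib transversal_prod_def algebra_simps)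
  also have "\<dots> = (\<Sum>f \<in> S \<rightarrow>\<^sub>E UNIV. transversal_prod X S f * minor_along Y S f)"
    unfolding minor_along_def sum_distrib_left by (rule sum.swap)
  finally show ?thesis .
qed

lemma minor_along_not_inj:
  fixes Y :: "real^'m::finite^'n::finite"
  assumes "\<not> inj_on f S"
  shows "minor_along Y S f = 0"
proof -
  obtain i j where ij: "i \<in> S" "j \<in> S" "i \<noteq> j" "f i = f j"
    using assms unfolding inj_on_def by blast
  define t where "t = Transposition.transpose i j"
  have t: "t permutes S" unfolding t_def using ij by (simp add: permutes_swap_id)
  have f_t: "f (t k) = f k" for k unfolding t_def using ij by (auto simp: Transposition.transpose_def)
  define T where "T p = of_int (sign p) * (\<Prod>i\<in>S. Y $ p i $ f i)" for p
  have T_comp: "T (p \<circ> t) = - T p" if p: "p permutes S" for p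
  proof -
    have "(\<Prod>k\<in>S. Y $ p (t k) $ f k) = (\<Prod>k\<in>S. Y $ p (t k) $ f (t k))" using f_t by simp
    also have "\<dots> = (\<Prod>k\<in>S. Y $ p k $ f k)"
      using prod.permute[OF t, of "\<lambda>k. Y $ p k $ f k"] by (simp add: o_def)
    finally have "(\<Prod>k\<in>S. Y $ p (t k) $ f k) = (\<Prod>k\<in>S. Y $ p k $ f k)" .
    moreover have "sign (p \<circ> t) = sign p * sign t"
      using sign_compose permutes_imp_permutation p t finite by blast
    moreover have "sign t = -1" unfolding t_def using ij by (simp add: sign_swap_id)
    ultimately show ?thesis unfolding T_def by simp
  qed
  have "sum T {p. p permutes S} = sum (\<lambda>p. T (p \<circ> t)) {p. p permutes S}"
    by (rule sum.reindex_bij_witness[where i="\<lambda>p. p \<circ> t" and j="\<lambda>p. p \<circ> t"])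
       (auto simp: o_assoc[symmetric] t_def intro: permutes_compose[OF t[unfolded t_def]])
  also have "\<dots> = - sum T {p. p permutes S}" using T_comp by (simp add: sum_negf)
  finally show ?thesis unfolding minor_along_def T_def by simp
qed

lemma minor_along_injection:
  fixes Y :: "real^'m::finite^'n::finite"
  assumes f: "f \<in> injections S"
  shows "minor_along Y S f = rep_sign S f * signed_minor Y S (f ` S)"
proof -
  have inj_f: "inj_on f S" using f by (simp add: injections_def)
  have "(\<Prod>i\<in>S. Y $ p i $ f i) = transversal_prod Y S (f \<circ> inv p)" if p: "p permutes S" for p
    unfolding transversal_prod_def using prod.permute[OF p, of "\<lambda>k. Y $ k $ (f \<circ> inv p) k"]
    by (simp add: o_def permutes_inverses(2)[OF p])
  then have "minor_along Y S f = (\<Sum>p | p permutes S. of_int (sign (inv p)) * transversal_prod Y S (f \<circ> inv p))"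
    unfolding minor_along_def
    by (intro sum.cong refl) (auto simp: sign_inverse permutes_imp_permutation)
  also have "\<dots> = (\<Sum>q | q permutes S. of_int (sign q) * transversal_prod Y S (f \<circ> q))"
    by (rule sum.reindex_bij_witness[where i=inv and j=inv]) (auto simp: permutes_inv permutes_inv_inv)
  also have "\<dots> = (\<Sum>q | q permutes S. rep_sign S f * (rep_sign S (f \<circ> q) * transversal_prod Y S (f \<circ> q)))"
    by (intro sum.cong refl) (simp add: rep_sign_comp[OF f] mult.assoc[symmetric] rep_sign_square)
  also have "\<dots> = rep_sign S f * signed_minor Y S (f ` S)"
    unfolding signed_minor_def sum_distrib_left
  proof (rule sum.reindex_bij_witness[where i="\<lambda>g k. if k \<in> S then inv_into S f (g k) else k"
        and j="\<lambda>q. f \<circ> q"])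
    fix q assume q: "q \<in> {p. p permutes S}"
    show "(\<lambda>k. if k \<in> S then inv_into S f ((f \<circ> q) k) else k) = q"
      using q inj_f by (intro ext) (simp add: permutes_in_image permutes_not_in inv_into_f_f)
    show "f \<circ> q \<in> {g. g \<in> injections S \<and> g ` S = f ` S}"
      using comp_permutes_injections[OF f] q by simp
  next
    fix g assume g: "g \<in> {g. g \<in> injections S \<and> g ` S = f ` S}"
    then have inj_g: "inj_on g S" by (simp add: injections_def)
    note g_perm = permutes_inv_into_comp[OF inj_g inj_f, simplified g[simplified]]
    show "(\<lambda>k. if k \<in> S then inv_into S f (g k) else k) \<in> {p. p permutes S}"
      using g_perm(1) g by simp
    show "f \<circ> (\<lambda>k. if k \<in> S then inv_into S f (g k) else k) = g"
    proof
      fix k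
      show "(f \<circ> (\<lambda>k. if k \<in> S then inv_into S f (g k) else k)) k = g k"
        using g_perm(2)[of k] f g by (auto simp: injections_def PiE_def extensional_def)
    qed
  qed simp
  finally show ?thesis .
qed

lemma principal_minor_mult_transpose_Cauchy_Binet:
  fixes X Y :: "real^'m::finite^'n::finite"
  shows "principal_minor (X ** transpose Y) S =
    (\<Sum>T \<in> (\<lambda>f. f ` S) ` injections S. signed_minor X S T * signed_minor Y S T)"
proof -
  have "principal_minor (X ** transpose Y) S =
      (\<Sum>f \<in> injections S. transversal_prod X S f * minor_along Y S f)"
    unfolding principal_minor_mult_transpose
    by (rule sum.mono_neutral_right) (auto simp: injections_def minor_along_not_inj finite_PiE)
  also have "\<dots> = (\<Sum>f \<in> injections S. rep_sign S f * transversal_prod X S f * signed_minor Y S (f ` S))"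
    by (intro sum.cong refl) (simp add: minor_along_injection)
  also have "\<dots> = (\<Sum>T \<in> (\<lambda>f. f ` S) ` injections S. \<Sum>f | f \<in> injections S \<and> f ` S = T.
      rep_sign S f * transversal_prod X S f * signed_minor Y S (f ` S))"
    by (rule sum.image_gen[OF finite_injections])
  also have "\<dots> = (\<Sum>T \<in> (\<lambda>f. f ` S) ` injections S. signed_minor X S T * signed_minor Y S T)"
    unfolding signed_minor_def[of X] sum_distrib_right by (intro sum.cong refl) auto
  finally show ?thesis .
qed

definition sgn_matrix :: "real^'m^'n \<Rightarrow> real^'m^'n" where
  "sgn_matrix M = (\<chi> i j. sgn (M $ i $ j))"

lemma sgn_prod: "sgn (\<Prod>i\<in>S. h i) = (\<Prod>i\<in>S. sgn (h i :: real))"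
  by (induction S rule: infinite_finite_induct) (auto simp: sgn_mult)

lemma sgn_transversal_prod:
  "X \<in> qual_class M' \<Longrightarrow> sgn (transversal_prod X S f) = transversal_prod (sgn_matrix M') S f"
  by (simp add: qual_class_def transversal_prod_def sgn_matrix_def sgn_prod)

lemma steady_transversal_prod_scaled:
  fixes X M' :: "real^'m::finite^'n::finite"
  assumes X: "X \<in> qual_class M'" and steady: "dsr_steady X (transpose X)"
  shows "\<exists>c \<ge> 0. \<forall>f \<in> injections S. f ` S = T \<longrightarrow>
    transversal_prod X S f = c * transversal_prod (sgn_matrix M') S f"
proof (cases "\<exists>h \<in> injections S. h ` S = T \<and> transversal_prod X S h \<noteq> 0")
  case True
  then obtain h where h: "h \<in> injections S" "h ` S = T" "transversal_prod X S h \<noteq> 0" by blast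
  have nonzero: "\<forall>i\<in>S. X $ i $ g i \<noteq> 0" if "transversal_prod X S g \<noteq> 0" for g
    using that by (simp add: transversal_prod_def)
  have "transversal_prod X S f = \<bar>transversal_prod X S h\<bar> * transversal_prod (sgn_matrix M') S f"
    if f: "f \<in> injections S" "f ` S = T" for f
  proof (cases "transversal_prod X S f = 0")
    case True
    then show ?thesis using sgn_transversal_prod[OF X, of S f] by simp
  next
    case False
    have abs_eq: "\<bar>transversal_prod X S f\<bar> = \<bar>transversal_prod X S h\<bar>"
      unfolding transversal_prod_def
      by (rule steady_abs_prod_eq[OF steady finite _ nonzero[OF h(3)]])
        (use f h nonzero[OF False] in \<open>auto simp: injections_def\<close>)
    have "transversal_prod X S f = sgn (transversal_prod X S f) * \<bar>transversal_prod X S f\<bar>"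
      by (simp only: sgn_mult_abs)
    also have "\<dots> = \<bar>transversal_prod X S h\<bar> * transversal_prod (sgn_matrix M') S f"
      using abs_eq by (simp add: sgn_transversal_prod[OF X] mult.commute)
    finally show ?thesis .
  qed
  then show ?thesis by (intro exI[of _ "\<bar>transversal_prod X S h\<bar>"]) simp
next
  case False
  then show ?thesis by (intro exI[of _ 0]) simp
qed

lemma steady_signed_minor_scaled:
  fixes X M' :: "real^'m::finite^'n::finite"
  assumes "X \<in> qual_class M'" and "dsr_steady X (transpose X)"
  shows "\<exists>c \<ge> 0. signed_minor X S T = c * signed_minor (sgn_matrix M') S T"
proof -
  obtain c where "c \<ge> 0" and scaled: "\<forall>f \<in> injections S. f ` S = T \<longrightarrow>
      transversal_prod X S f = c * transversal_prod (sgn_matrix M') S f"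
    using steady_transversal_prod_scaled[OF assms] by blast
  have "signed_minor X S T = c * signed_minor (sgn_matrix M') S T"
    unfolding signed_minor_def sum_distrib_left
    by (intro sum.cong refl) (simp add: scaled mult.left_commute)
  with \<open>c \<ge> 0\<close> show ?thesis by blast
qed

lemma principal_minor_mult_transpose_nonneg:
  fixes X Y M' :: "real^'m::finite^'n::finite"
  assumes "X \<in> qual_class M'" "dsr_steady X (transpose X)"
    and "Y \<in> qual_class M'" "dsr_steady Y (transpose Y)"
  shows "principal_minor (X ** transpose Y) S \<ge> 0"
  unfolding principal_minor_mult_transpose_Cauchy_Binet
proof (rule sum_nonneg)
  fix T
  obtain c where "c \<ge> 0" "signed_minor X S T = c * signed_minor (sgn_matrix M') S T"
    using steady_signed_minor_scaled[OF assms(1,2)] by blast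
  moreover obtain d where "d \<ge> 0" "signed_minor Y S T = d * signed_minor (sgn_matrix M') S T"
    using steady_signed_minor_scaled[OF assms(3,4)] by blast
  ultimately show "signed_minor X S T * signed_minor Y S T \<ge> 0"
    by (simp add: mult_ac)
qed

lemma continuous_on_principal_minor_mult_transpose:
  "continuous_on UNIV (\<lambda>Z :: (real^'m::finite^'n::finite) \<times> (real^'m^'n).
     principal_minor (fst Z ** transpose (snd Z)) S)"
  unfolding principal_minor_def matrix_matrix_mult_def transpose_def
  by (simp, intro continuous_intros)

theorem lemma2p8:
  fixes M' :: "real^'m^'n" and \<M> :: "(real^'m^'n) set"
    and A :: "real^'m^'n" and B :: "real^'n^'m"
  assumes "\<M> \<subseteq> qual_class M'"
    and "\<forall>M\<in>\<M>. dsr_steady M (transpose M)"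
    and "A \<in> closure \<M>"
    and "transpose B \<in> closure \<M>"
  shows "P0_matrix (A ** B)"
  unfolding P0_matrix_def
proof
  fix S
  have nonneg: "principal_minor (fst Z ** transpose (snd Z)) S \<ge> 0" if "Z \<in> \<M> \<times> \<M>" for Z
    using that assms(1,2)
    by (intro principal_minor_mult_transpose_nonneg[where M'=M']) (auto simp: mem_Times_iff)
  have "(A, transpose B) \<in> closure (\<M> \<times> \<M>)"
    using assms(3,4) by (simp add: closure_Times)
  then have "principal_minor (fst (A, transpose B) ** transpose (snd (A, transpose B))) S \<ge> 0"
    by (rule continuous_ge_on_closure[OF continuous_on_subset[OF
          continuous_on_principal_minor_mult_transpose subset_UNIV] _ nonneg])
  then show "principal_minor (A ** B) S \<ge> 0" by (simp add: transpose_transpose)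
qed

end
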